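(* Let $K_{c2}>0$ and let $K\mapsto\theta^*(K)$, $K\in(K_{c2},K_0)$, be a continuously differentiable family of stable phase-locked steady states of the Kuramoto network with coupling strength $K$. Let $\lambda_2(K)<0$ be the largest nonzero eigenvalue of the Jacobian $J(K)$ at $\theta^*(K)$ with a unit eigenvector $v_2(K)$. Suppose the phase-locked state loses stability at $K_{c2}$ in the sense that $\lambda_2(K)\to 0$ as $K\to K_{c2}^+$, and suppose $v_2\cdot\omega\neq 0$ in the limit, i.e. there is $c>0$ with $|v_2(K)\cdot\omega|\ge c$ for all $K$ near $K_{c2}$. Then $$\frac{d r_{\rm uni}(\theta^*(K))}{dK}\to+\infty\quad\text{as } K\to K_{c2}^+ .$$
   Context: Kuramoto network: $N\ge 2$ oscillators with phases $\theta_i(t)$ obeying $\frac{d\theta_i}{dt}=\omega_i+K\sum_{j=1}^N A_{i,j}\sin(\theta_j-\theta_i)$, where $\omega=(\omega_1,\dots,\omega_N)^T\in\mathbb{R}^N$ are natural frequencies with $\sum_{i=1}^N\omega_i=0$, $K>0$ is the coupling strength, and $A=(A_{i,j})$ is the symmetric adjacency matrix ($A_{i,j}=A_{j,i}\in\{0,1\}$, $A_{i,i}=0$) of a connected undirected graph; $k_i=\sum_j A_{i,j}$ is the degree of node $i$. A phase-locked steady state is a vector $\theta^*\in\mathbb{R}^N$ with $\omega_i+K\sum_j A_{i,j}\sin(\theta_j^*-\theta_i^* )=0$ for all $i$. Its Jacobian $J$ is the symmetric matrix with $J_{i,j}=KA_{i,j}\cos(\theta_i^*-\theta_j^* )$ for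 $i\neq j$ and $J_{i,i}=-K\sum_j A_{i,j}\cos(\theta_i^*-\theta_j^* )$; it always has eigenvalue $\lambda_1=0$ with eigenvector $(1,\dots,1)^T$. The state is called stable if all remaining eigenvalues $\lambda_2\ge\dots\ge\lambda_N$ of $J$ are strictly negative. $K_{c2}$ denotes the critical coupling at which the fully phase-locked state appears/loses stability (in a saddle-node bifurcation). The order parameter is $r_{\rm uni}=\frac{1}{\sum_i k_i}\sum_{i,j}A_{i,j}\langle\cos(\theta_i-\theta_j)\rangle_t$, which for a steady state equals $r_{\rm uni}(\theta^* )=\frac{1}{\sum_i k_i}\sum_{i,j}A_{i,j}\cos(\theta_i^*-\theta_j^* )$. *)

theory Defs
  imports "HOL-Analysis.Analysis"
begin

definition simple_graph_adj :: "real^'n^'n \<Rightarrow> bool" where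
  "simple_graph_adj A \<longleftrightarrow>
     (\<forall>i j. A$i$j = 0 \<or> A$i$j = 1) \<and> (\<forall>i j. A$i$j = A$j$i) \<and> (\<forall>i. A$i$i = 0)"

definition connected_adj :: "real^'n^'n \<Rightarrow> bool" where
  "connected_adj A \<longleftrightarrow> (\<forall>i j. (i, j) \<in> {(a, b). A$a$b = 1}\<^sup>*)"

definition degree :: "real^'n^'n \<Rightarrow> 'n \<Rightarrow> real" where
  "degree A i = (\<Sum>j\<in>UNIV. A$i$j)"

definition phase_locked :: "real^'n \<Rightarrow> real \<Rightarrow> real^'n^'n \<Rightarrow> real^'n \<Rightarrow> bool" where
  "phase_locked \<omega> K A \<theta> \<longleftrightarrow>
     (\<forall>i. \<omega>$i + K * (\<Sum>j\<in>UNIV. A$i$j * sin (\<theta>$j - \<theta>$i)) = 0)"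

definition jacobian :: "real \<Rightarrow> real^'n^'n \<Rightarrow> real^'n \<Rightarrow> real^'n^'n" where
  "jacobian K A \<theta> = (\<chi> i j. if i = j then - K * (\<Sum>l\<in>UNIV. A$i$l * cos (\<theta>$i - \<theta>$l))
                               else K * A$i$j * cos (\<theta>$i - \<theta>$j))"

definition is_eigenvalue :: "real^'n^'n \<Rightarrow> real \<Rightarrow> bool" where
  "is_eigenvalue M \<mu> \<longleftrightarrow> (\<exists>v. v \<noteq> 0 \<and> M *v v = \<mu> *\<^sub>R v)"

text \<open>Since the Jacobian is symmetric, simplicity of
  the eigenvalue 0 is expressed as: its eigenspace is spanned by (1,...,1).\<close>
definition stable_state :: "real \<Rightarrow> real^'n^'n \<Rightarrow> real^'n \<Rightarrow> bool" where
  "stable_state K A \<theta> \<longleftrightarrow>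
     (let J = jacobian K A \<theta> in
        {v. J *v v = 0} = span {(\<chi> i. (1::real))} \<and>
        (\<forall>\<mu>. is_eigenvalue J \<mu> \<and> \<mu> \<noteq> 0 \<longrightarrow> \<mu> < 0))"

definition r_uni :: "real^'n^'n \<Rightarrow> real^'n \<Rightarrow> real" where
  "r_uni A \<theta> = (1 / (\<Sum>i\<in>UNIV. degree A i)) *
                 (\<Sum>i\<in>UNIV. \<Sum>j\<in>UNIV. A$i$j * cos (\<theta>$i - \<theta>$j))"

end

theory Submission
  imports Defs
begin

text \<open>Differentiating the steady-state equations in \<open>K\<close> gives \<open>\<omega> = K J \<theta>'\<close>, and differentiating
  \<open>r_uni\<close> (using the symmetry of \<open>A\<close> and the steady-state equations once more) gives
  \<open>dr_uni/dK = -(2 / \<Sum>k\<^sub>i) \<theta>'\<cdot>J\<theta>'\<close>. As \<open>J\<close> is symmetric with nonpositive spectrum,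
  \<open>\<theta>'\<cdot>J\<theta>' \<le> \<lambda>\<^sub>2 (v\<^sub>2\<cdot>\<theta>')\<^sup>2\<close>, while \<open>v\<^sub>2\<cdot>\<omega> = K \<lambda>\<^sub>2 (v\<^sub>2\<cdot>\<theta>')\<close>. Hence
  \<open>dr_uni/dK \<ge> 2 (v\<^sub>2\<cdot>\<omega>)\<^sup>2 / (\<Sum>k\<^sub>i K\<^sup>2 |\<lambda>\<^sub>2|)\<close>, which diverges as \<open>\<lambda>\<^sub>2 \<rightarrow> 0\<close>
  while \<open>|v\<^sub>2\<cdot>\<omega>|\<close> stays bounded away from zero.\<close>

lemma inner_symmetric_matrix_vector_mult:
  fixes M :: "real^'n^'n"
  assumes "transpose M = M"
  shows "x \<bullet> (M *v y) = (M *v x) \<bullet> y"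
  by (metis assms dot_lmul_matrix vector_transpose_matrix)

lemma linear_plus_quadratic_nonneg_imp_zero:
  fixes b c :: real
  assumes "\<And>t. 0 \<le> b * t + c * t\<^sup>2"
  shows "b = 0"
proof (rule ccontr)
  assume "b \<noteq> 0"
  define s where "s = 1 / (\<bar>c\<bar> + 1)"
  have "s > 0" and "c * s < 1"
    by (auto simp: s_def field_simps)
  have "b * (- b * s) + c * (- b * s)\<^sup>2 = b\<^sup>2 * s * (c * s - 1)"
    by (simp add: power2_eq_square algebra_simps)
  also have "\<dots> < 0"
    using \<open>b \<noteq> 0\<close> \<open>s > 0\<close> \<open>c * s < 1\<close> by (simp add: mult_pos_neg)
  finally show False using assms[of "- b * s"] by simp
qed

lemma self_adjoint_nonneg_form_zero_imp_zero:
  fixes f :: "'a::real_inner \<Rightarrow> 'a"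
  assumes "linear f" and self_adjoint: "\<And>x y. x \<bullet> f y = f x \<bullet> y"
    and nonneg: "\<And>y. 0 \<le> y \<bullet> f y" and "x \<bullet> f x = 0"
  shows "f x = 0"
proof -
  have "0 \<le> 2 * (f x \<bullet> f x) * t + (f x \<bullet> f (f x)) * t\<^sup>2" for t
  proof -
    have "(x + t *\<^sub>R f x) \<bullet> f (x + t *\<^sub>R f x)
          = 2 * (f x \<bullet> f x) * t + (f x \<bullet> f (f x)) * t\<^sup>2"
      using \<open>x \<bullet> f x = 0\<close> self_adjoint[of x "f x"]
      by (simp add: linear_add[OF \<open>linear f\<close>] linear_scale[OF \<open>linear f\<close>]
          inner_add_left inner_add_right power2_eq_square algebra_simps)
    then show ?thesis using nonneg by metis
  qed
  then have "2 * (f x \<bullet> f x) = 0" by (rule linear_plus_quadratic_nonneg_imp_zero)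
  then show ?thesis by simp
qed

lemma symmetric_matrix_quadratic_form_le_eigenvalue:
  fixes M :: "real^'n^'n"
  assumes sym: "transpose M = M"
  obtains \<mu> where "is_eigenvalue M \<mu>" and "\<And>x. x \<bullet> (M *v x) \<le> \<mu> * (x \<bullet> x)"
proof -
  \<comment> \<open>The maximum \<open>\<mu>\<close> of the form on the unit sphere makes \<open>\<mu> I - M\<close> positive semidefinite
    and isotropic at the maximiser, so the maximiser is an eigenvector.\<close>
  define q where "q x = x \<bullet> (M *v x)" for x :: "real^'n"
  have "continuous_on (sphere 0 1) q"
    unfolding q_def by (intro continuous_intros linear_continuous_on matrix_vector_mul_bounded_linear)
  then obtain x0 where x0: "x0 \<in> sphere 0 1" and max: "\<And>y. y \<in> sphere 0 1 \<Longrightarrow> q y \<le> q x0"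
    using continuous_attains_sup[OF compact_sphere _ \<open>continuous_on (sphere 0 1) q\<close>]
    by (auto simp: sphere_eq_empty)
  define \<mu> where "\<mu> = q x0"
  have bound: "q x \<le> \<mu> * (x \<bullet> x)" for x
  proof (cases "x = 0")
    case False
    then have "q (x /\<^sub>R norm x) \<le> \<mu>" by (auto simp: \<mu>_def intro: max)
    moreover have "q (x /\<^sub>R norm x) = q x / (x \<bullet> x)"
      by (simp add: q_def matrix_vector_mult_scaleR dot_square_norm power2_eq_square divide_inverse)
    ultimately show ?thesis using False by (simp add: divide_le_eq mult.commute)
  qed (simp add: q_def)
  define f where "f y = \<mu> *\<^sub>R y - M *v y" for y
  have "f x0 = 0"
  proof (rule self_adjoint_nonneg_form_zero_imp_zero[where f = f])
    show "linear f"
      unfolding f_def by (intro linear_compose_sub linear_scaleR matrix_vector_mul_linear)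
  next
    show "x \<bullet> f y = f x \<bullet> y" for x y
      by (simp add: f_def inner_diff_left inner_diff_right inner_symmetric_matrix_vector_mult[OF sym])
  next
    show "0 \<le> y \<bullet> f y" for y
      using bound[of y] by (simp add: f_def q_def inner_diff_right)
  next
    have "x0 \<bullet> x0 = 1" using x0 by (simp add: dot_square_norm)
    then show "x0 \<bullet> f x0 = 0" by (simp add: f_def q_def \<mu>_def inner_diff_right)
  qed
  then have "is_eigenvalue M \<mu>"
    using x0 unfolding is_eigenvalue_def f_def
    by (metis eq_iff_diff_eq_0 norm_zero mem_sphere_0 zero_neq_one)
  with bound show ?thesis using that unfolding q_def by blast
qed

lemma symmetric_matrix_quadratic_form_nonpos:
  fixes M :: "real^'n^'n"
  assumes "transpose M = M" and "\<forall>\<mu>. is_eigenvalue M \<mu> \<and> \<mu> \<noteq> 0 \<longrightarrow> \<mu> < 0"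
  shows "x \<bullet> (M *v x) \<le> 0"
proof -
  obtain \<mu> where "is_eigenvalue M \<mu>" and "x \<bullet> (M *v x) \<le> \<mu> * (x \<bullet> x)"
    using symmetric_matrix_quadratic_form_le_eigenvalue[OF assms(1)] by metis
  moreover from \<open>is_eigenvalue M \<mu>\<close> have "\<mu> \<le> 0" using assms(2) by force
  ultimately show ?thesis by (metis inner_ge_zero mult_nonpos_nonneg order_trans)
qed

lemma quadratic_form_le_eigenvalue_component:
  fixes M :: "real^'n^'n"
  assumes sym: "transpose M = M" and nonpos: "\<forall>\<mu>. is_eigenvalue M \<mu> \<and> \<mu> \<noteq> 0 \<longrightarrow> \<mu> < 0"
    and "norm v = 1" and eig: "M *v v = lam *\<^sub>R v"
  shows "d \<bullet> (M *v d) \<le> lam * (v \<bullet> d)\<^sup>2"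
proof -
  define a where "a = v \<bullet> d"
  define w where "w = d - a *\<^sub>R v"
  have "v \<bullet> v = 1" using \<open>norm v = 1\<close> by (simp add: dot_square_norm)
  then have "v \<bullet> w = 0" by (simp add: w_def a_def inner_diff_right)
  then have "v \<bullet> (M *v w) = 0"
    by (simp add: inner_symmetric_matrix_vector_mult[OF sym] eig)
  have "d \<bullet> (M *v d) = w \<bullet> (M *v w) + lam * a\<^sup>2"
    using \<open>v \<bullet> v = 1\<close> \<open>v \<bullet> w = 0\<close> \<open>v \<bullet> (M *v w) = 0\<close>
    by (simp add: w_def matrix_vector_right_distrib matrix_vector_mult_scaleR eig inner_add_left
        inner_add_right inner_commute power2_eq_square algebra_simps)
  moreover have "w \<bullet> (M *v w) \<le> 0" by (rule symmetric_matrix_quadratic_form_nonpos[OF sym nonpos])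
  ultimately show ?thesis by (simp add: a_def)
qed

lemma transpose_jacobian:
  assumes "\<And>i j. A$i$j = A$j$i"
  shows "transpose (jacobian K A \<theta>) = jacobian K A \<theta>"
  using assms by (auto simp: vec_eq_iff transpose_def jacobian_def cos_diff mult.commute)

lemma jacobian_mult_vector_component:
  assumes "\<And>i. A$i$i = 0"
  shows "(jacobian K A \<theta> *v d) $ i = K * (\<Sum>j\<in>UNIV. A$i$j * cos (\<theta>$j - \<theta>$i) * (d$j - d$i))"
proof -
  have "jacobian K A \<theta> $ i $ j
        = K * A$i$j * cos (\<theta>$j - \<theta>$i)
          - (if j = i then K * (\<Sum>l\<in>UNIV. A$i$l * cos (\<theta>$l - \<theta>$i)) else 0)"
    for j using assms by (auto simp: jacobian_def cos_diff mult.commute)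
  then show ?thesis
    by (simp add: matrix_vector_mult_def left_diff_distrib sum_subtractf
        if_distrib[of "\<lambda>x. x * _"] if_distrib[of "\<lambda>x. _ * x"] sum_distrib_left sum_distrib_right right_diff_distrib mult_ac cong: if_cong)
qed

lemma has_real_derivative_vec_nth:
  assumes "(\<theta> has_vector_derivative d) (at K)"
  shows "((\<lambda>k. \<theta> k $ i) has_real_derivative d $ i) (at K)"
  using bounded_linear.has_vector_derivative[OF bounded_linear_vec_nth assms]
  by (simp add: has_real_derivative_iff_has_vector_derivative)

lemma phase_locked_velocity:
  fixes \<theta> :: "real \<Rightarrow> real^'n"
  assumes diag: "\<And>i. A$i$i = 0" and "open U" and "K \<in> U"
    and steady: "\<And>k. k \<in> U \<Longrightarrow> phase_locked \<omega> k A (\<theta> k)"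
    and deriv: "(\<theta> has_vector_derivative d) (at K)"
  shows "\<omega> = K *\<^sub>R (jacobian K A (\<theta> K) *v d)"
proof -
  have "\<omega>$i = K * (jacobian K A (\<theta> K) *v d) $ i" for i
  proof -
    define F where "F k = \<omega>$i + k * (\<Sum>j\<in>UNIV. A$i$j * sin (\<theta> k $ j - \<theta> k $ i))" for k
    have "(F has_real_derivative
            (\<Sum>j\<in>UNIV. A$i$j * sin (\<theta> K $ j - \<theta> K $ i)) + (jacobian K A (\<theta> K) *v d) $ i) (at K)"
      unfolding F_def jacobian_mult_vector_component[OF diag]
      by (rule derivative_eq_intros has_real_derivative_vec_nth[OF deriv] refl
          | simp add: sum_distrib_left mult_ac)+
    moreover obtain e where "e > 0" and "ball K e \<subseteq> U"
      using \<open>open U\<close> \<open>K \<in> U\<close> by (auto simp: open_contains_ball)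
    moreover have "F k = 0" if "k \<in> U" for k
      using steady[OF that] by (simp add: F_def phase_locked_def)
    ultimately have "(\<Sum>j\<in>UNIV. A$i$j * sin (\<theta> K $ j - \<theta> K $ i)) + (jacobian K A (\<theta> K) *v d) $ i = 0"
      using \<open>K \<in> U\<close> by (intro DERIV_local_const[of F _ K e]) (auto simp: dist_real_def subset_iff)
    moreover have "\<omega>$i + K * (\<Sum>j\<in>UNIV. A$i$j * sin (\<theta> K $ j - \<theta> K $ i)) = 0"
      using steady[OF \<open>K \<in> U\<close>] by (simp add: phase_locked_def)
    ultimately show ?thesis by algebra
  qed
  then show ?thesis by (simp add: vec_eq_iff)
qed

lemma double_sum_antisymmetric:
  fixes A s :: "'n::finite \<Rightarrow> 'n \<Rightarrow> real"
  assumes "\<And>i j. A i j = A j i" and "\<And>i j. s j i = - s i j"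
  shows "(\<Sum>i\<in>UNIV. \<Sum>j\<in>UNIV. A i j * s i j * (d i - d j))
         = 2 * (\<Sum>i\<in>UNIV. d i * (\<Sum>j\<in>UNIV. A i j * s i j))"
proof -
  have "(\<Sum>i\<in>UNIV. \<Sum>j\<in>UNIV. A i j * s i j * d j) = (\<Sum>j\<in>UNIV. \<Sum>i\<in>UNIV. A i j * s i j * d j)"
    by (rule sum.swap)
  also have "\<dots> = (\<Sum>j\<in>UNIV. \<Sum>i\<in>UNIV. - (A j i * s j i * d j))"
  proof (intro sum.cong refl)
    fix i j
    show "A i j * s i j * d j = - (A j i * s j i * d j)"
      using assms(1)[of i j] assms(2)[of j i] by simp
  qed
  also have "\<dots> = - (\<Sum>i\<in>UNIV. \<Sum>j\<in>UNIV. A i j * s i j * d i)"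
    by (simp add: sum_negf)
  finally show ?thesis
    by (simp add: right_diff_distrib sum_subtractf sum_distrib_left mult_ac)
qed

lemma has_real_derivative_r_uni:
  fixes \<theta> :: "real \<Rightarrow> real^'n"
  assumes sym: "\<And>i j. A$i$j = A$j$i" and deriv: "(\<theta> has_vector_derivative d) (at K)"
  shows "((\<lambda>k. r_uni A (\<theta> k)) has_real_derivative
           2 / (\<Sum>i\<in>UNIV. degree A i) * (\<Sum>i\<in>UNIV. d$i * (\<Sum>j\<in>UNIV. A$i$j * sin (\<theta> K $ j - \<theta> K $ i))))
         (at K)"
proof -
  have "((\<lambda>k. r_uni A (\<theta> k)) has_real_derivative 1 / (\<Sum>i\<in>UNIV. degree A i) *
          (\<Sum>i\<in>UNIV. \<Sum>j\<in>UNIV. A$i$j * (- sin (\<theta> K $ i - \<theta> K $ j) * (d$i - d$j)))) (at K)"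
    unfolding r_uni_def
    by (rule derivative_eq_intros has_real_derivative_vec_nth[OF deriv] refl | simp add: mult_ac)+
  moreover have "(\<Sum>i\<in>UNIV. \<Sum>j\<in>UNIV. A$i$j * (- sin (\<theta> K $ i - \<theta> K $ j) * (d$i - d$j)))
      = 2 * (\<Sum>i\<in>UNIV. d$i * (\<Sum>j\<in>UNIV. A$i$j * sin (\<theta> K $ j - \<theta> K $ i)))"
  proof -
    have sin_swap: "- sin (x - y) = sin (y - x)" for x y :: real
      by (metis minus_diff_eq sin_minus)
    have "(\<Sum>i\<in>UNIV. \<Sum>j\<in>UNIV. A$i$j * (- sin (\<theta> K $ i - \<theta> K $ j) * (d$i - d$j)))
        = (\<Sum>i\<in>UNIV. \<Sum>j\<in>UNIV. A$i$j * sin (\<theta> K $ j - \<theta> K $ i) * (d$i - d$j))"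
      by (simp only: sin_swap mult.assoc)
    also have "\<dots> = 2 * (\<Sum>i\<in>UNIV. d$i * (\<Sum>j\<in>UNIV. A$i$j * sin (\<theta> K $ j - \<theta> K $ i)))"
      by (rule double_sum_antisymmetric[where A = "\<lambda>i j. A$i$j" and d = "\<lambda>i. d$i"])
        (use sym sin_swap in \<open>simp, metis minus_minus\<close>)
    finally show ?thesis .
  qed
  ultimately show ?thesis by simp
qed

lemma deriv_r_uni_phase_locked:
  fixes \<theta> :: "real \<Rightarrow> real^'n"
  assumes sym: "\<And>i j. A$i$j = A$j$i" and diag: "\<And>i. A$i$i = 0" and "open U" and "K \<in> U"
    and steady: "\<And>k. k \<in> U \<Longrightarrow> phase_locked \<omega> k A (\<theta> k)"
    and deriv: "(\<theta> has_vector_derivative d) (at K)" and "K \<noteq> 0"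
  shows "deriv (\<lambda>k. r_uni A (\<theta> k)) K
         = - (2 / (\<Sum>i\<in>UNIV. degree A i)) * (d \<bullet> (jacobian K A (\<theta> K) *v d))"
proof -
  have \<omega>: "\<omega> = K *\<^sub>R (jacobian K A (\<theta> K) *v d)"
    by (rule phase_locked_velocity[OF diag \<open>open U\<close> \<open>K \<in> U\<close> steady deriv])
  have "(\<Sum>j\<in>UNIV. A$i$j * sin (\<theta> K $ j - \<theta> K $ i)) = - (jacobian K A (\<theta> K) *v d) $ i" for i
  proof -
    have "K * (jacobian K A (\<theta> K) *v d) $ i + K * (\<Sum>j\<in>UNIV. A$i$j * sin (\<theta> K $ j - \<theta> K $ i)) = 0"
      using steady[OF \<open>K \<in> U\<close>] \<omega> by (simp add: phase_locked_def vec_eq_iff)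
    then show ?thesis using \<open>K \<noteq> 0\<close> by algebra
  qed
  then show ?thesis
    using DERIV_imp_deriv[OF has_real_derivative_r_uni[OF sym deriv]]
    by (simp add: inner_vec_def sum_negf)
qed

lemma deriv_r_uni_lower_bound:
  fixes \<theta> :: "real \<Rightarrow> real^'n" and v :: "real^'n"
  assumes sym: "\<And>i j. A$i$j = A$j$i" and diag: "\<And>i. A$i$i = 0" and "open U" and "K \<in> U"
    and steady: "\<And>k. k \<in> U \<Longrightarrow> phase_locked \<omega> k A (\<theta> k)"
    and deriv: "(\<theta> has_vector_derivative d) (at K)" and "K \<noteq> 0"
    and stable: "stable_state K A (\<theta> K)" and "0 \<le> (\<Sum>i\<in>UNIV. degree A i)"
    and "norm v = 1" and eig: "jacobian K A (\<theta> K) *v v = lam *\<^sub>R v" and "lam < 0"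
  shows "2 / (\<Sum>i\<in>UNIV. degree A i) * ((v \<bullet> \<omega>) / K)\<^sup>2 * inverse (- lam)
         \<le> deriv (\<lambda>k. r_uni A (\<theta> k)) K"
proof -
  define J where "J = jacobian K A (\<theta> K)"
  have J_sym: "transpose J = J" unfolding J_def by (rule transpose_jacobian[OF sym])
  have "v \<bullet> \<omega> = K * (v \<bullet> (J *v d))"
    using phase_locked_velocity[OF diag \<open>open U\<close> \<open>K \<in> U\<close> steady deriv] by (simp add: J_def)
  also have "\<dots> = K * lam * (v \<bullet> d)"
    by (simp add: inner_symmetric_matrix_vector_mult[OF J_sym] eig[folded J_def])
  finally have "((v \<bullet> \<omega>) / K)\<^sup>2 * inverse (- lam) = - lam * (v \<bullet> d)\<^sup>2"
    using \<open>K \<noteq> 0\<close> \<open>lam < 0\<close> by (simp add: field_simps power2_eq_square)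
  also have "\<dots> \<le> - (d \<bullet> (J *v d))"
    using quadratic_form_le_eigenvalue_component[OF J_sym _ \<open>norm v = 1\<close>, of lam d] stable eig
    by (simp add: J_def stable_state_def Let_def)
  finally have "2 / (\<Sum>i\<in>UNIV. degree A i) * (((v \<bullet> \<omega>) / K)\<^sup>2 * inverse (- lam))
      \<le> 2 / (\<Sum>i\<in>UNIV. degree A i) * - (d \<bullet> (J *v d))"
    using \<open>0 \<le> (\<Sum>i\<in>UNIV. degree A i)\<close> by (intro mult_left_mono) simp_all
  then show ?thesis
    using deriv_r_uni_phase_locked[OF sym diag \<open>open U\<close> \<open>K \<in> U\<close> steady deriv \<open>K \<noteq> 0\<close>]
    by (simp add: J_def mult.assoc)
qed

lemma sum_degree_pos:
  fixes A :: "real^'n^'n"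
  assumes "CARD('n) \<ge> 2" and graph: "simple_graph_adj A" and "connected_adj A"
  shows "0 < (\<Sum>i\<in>UNIV. degree A i)"
proof -
  obtain i j :: 'n where "i \<noteq> j"
    using \<open>CARD('n) \<ge> 2\<close> card_le_Suc0_iff_eq[of "UNIV :: 'n set"] by fastforce
  moreover have "(i, j) \<in> {(a, b). A$a$b = 1}\<^sup>*"
    using \<open>connected_adj A\<close> unfolding connected_adj_def by blast
  ultimately obtain k where "A$i$k = 1" by (auto elim: converse_rtranclE)
  have nonneg: "0 \<le> A$a$b" for a b
    using graph unfolding simple_graph_adj_def by (metis order_refl zero_le_one)
  then have "0 \<le> degree A a" for a
    unfolding degree_def by (simp add: sum_nonneg)
  moreover have "0 < degree A i"
    unfolding degree_def using \<open>A$i$k = 1\<close> nonneg by (intro sum_pos2[of UNIV k]) auto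
  ultimately show ?thesis by (intro sum_pos2[of UNIV i]) auto
qed

lemma filterlim_at_top_of_inverse_lower_bound:
  fixes f g h :: "'a \<Rightarrow> real"
  assumes "(g \<longlongrightarrow> 0) F" and "\<forall>\<^sub>F x in F. g x < 0" and "C > 0"
    and "\<forall>\<^sub>F x in F. C \<le> h x" and "\<forall>\<^sub>F x in F. h x * inverse (- g x) \<le> f x"
  shows "filterlim f at_top F"
proof (rule filterlim_at_top_mono)
  have "filterlim (\<lambda>x. inverse (- g x)) at_top F"
    using tendsto_minus[OF assms(1)] assms(2)
    by (intro filterlim_inverse_at_top) (auto elim: eventually_mono)
  then show "filterlim (\<lambda>x. C * inverse (- g x)) at_top F"
    by (rule filterlim_tendsto_pos_mult_at_top[OF tendsto_const \<open>C > 0\<close>])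
  show "\<forall>\<^sub>F x in F. C * inverse (- g x) \<le> f x"
    using assms(2,4,5) by eventually_elim (metis mult_right_mono inverse_nonnegative_iff_nonnegative
        neg_0_le_iff_le less_imp_le order_trans)
qed

theorem theorem1:
  fixes A :: "real^'n^'n" and \<omega> :: "real^'n"
    and Kc2 K0 :: real
    and \<theta> \<theta>' :: "real \<Rightarrow> real^'n"
    and lam2 :: "real \<Rightarrow> real" and v2 :: "real \<Rightarrow> real^'n"
  assumes N2: "CARD('n) \<ge> 2"
    and graph: "simple_graph_adj A" and conn: "connected_adj A"
    and omega_sum: "(\<Sum>i\<in>UNIV. \<omega>$i) = 0"
    and Kc2_pos: "Kc2 > 0" and Kc2_lt: "Kc2 < K0"
    and deriv_theta: "\<forall>K\<in>{Kc2<..<K0}. (\<theta> has_vector_derivative \<theta>' K) (at K)"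
    and cont_deriv: "continuous_on {Kc2<..<K0} \<theta>'"
    and steady: "\<forall>K\<in>{Kc2<..<K0}. phase_locked \<omega> K A (\<theta> K)"
    and stable: "\<forall>K\<in>{Kc2<..<K0}. stable_state K A (\<theta> K)"
    and lam2_eig: "\<forall>K\<in>{Kc2<..<K0}. lam2 K < 0 \<and> is_eigenvalue (jacobian K A (\<theta> K)) (lam2 K)"
    and lam2_max: "\<forall>K\<in>{Kc2<..<K0}. \<forall>\<mu>. is_eigenvalue (jacobian K A (\<theta> K)) \<mu> \<and> \<mu> \<noteq> 0
                      \<longrightarrow> \<mu> \<le> lam2 K"
    and v2_eig: "\<forall>K\<in>{Kc2<..<K0}. norm (v2 K) = 1 \<and>
                      jacobian K A (\<theta> K) *v v2 K = lam2 K *\<^sub>R v2 K"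
    and lam2_lim: "(lam2 \<longlongrightarrow> 0) (at_right Kc2)"
    and overlap: "\<exists>c>0. \<forall>\<^sub>F K in at_right Kc2. \<bar>v2 K \<bullet> \<omega>\<bar> \<ge> c"
  shows "filterlim (\<lambda>K. deriv (\<lambda>k. r_uni A (\<theta> k)) K) at_top (at_right Kc2)"
proof -
  have sym: "\<And>i j. A$i$j = A$j$i" and diag: "\<And>i. A$i$i = 0"
    using graph unfolding simple_graph_adj_def by auto
  define S where "S = (\<Sum>i\<in>UNIV. degree A i)"
  have "0 < S" unfolding S_def by (rule sum_degree_pos[OF N2 graph conn])
  obtain c where "0 < c" and overlap_c: "\<forall>\<^sub>F K in at_right Kc2. c \<le> \<bar>v2 K \<bullet> \<omega>\<bar>"
    using overlap by blast
  have near: "\<forall>\<^sub>F K in at_right Kc2. K \<in> {Kc2<..<K0}"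
    by (rule eventually_at_right_real[OF Kc2_lt])
  have bound: "2 / S * ((v2 K \<bullet> \<omega>) / K)\<^sup>2 * inverse (- lam2 K) \<le> deriv (\<lambda>k. r_uni A (\<theta> k)) K"
    if "K \<in> {Kc2<..<K0}" for K
    unfolding S_def using that steady deriv_theta stable v2_eig lam2_eig \<open>0 < S\<close> Kc2_pos
    by (intro deriv_r_uni_lower_bound[where U = "{Kc2<..<K0}", OF sym diag]) (auto simp: S_def)
  have lower: "\<forall>\<^sub>F K in at_right Kc2. 2 / S * (c / K0)\<^sup>2 \<le> 2 / S * ((v2 K \<bullet> \<omega>) / K)\<^sup>2"
    using near overlap_c
  proof eventually_elim
    case (elim K)
    then have "c / K0 \<le> \<bar>(v2 K \<bullet> \<omega>) / K\<bar>"
      using \<open>0 < c\<close> Kc2_pos by (simp add: abs_divide frac_le)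
    then show ?case
      using \<open>0 < S\<close> \<open>0 < c\<close> Kc2_pos Kc2_lt
      by (metis power2_abs power_mono divide_nonneg_pos less_imp_le less_trans mult_left_mono
          zero_le_numeral)
  qed
  have "\<forall>\<^sub>F K in at_right Kc2. lam2 K < 0"
    using near by eventually_elim (use lam2_eig in auto)
  moreover have "0 < 2 / S * (c / K0)\<^sup>2"
    using \<open>0 < S\<close> \<open>0 < c\<close> Kc2_pos Kc2_lt by simp
  moreover have "\<forall>\<^sub>F K in at_right Kc2.
      2 / S * ((v2 K \<bullet> \<omega>) / K)\<^sup>2 * inverse (- lam2 K) \<le> deriv (\<lambda>k. r_uni A (\<theta> k)) K"
    using near by (rule eventually_mono) (rule bound)
  ultimately show ?thesis
    using lower by (intro filterlim_at_top_of_inverse_lower_bound[OF lam2_lim])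
qed

end
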